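(* In the $n$-fold replicate economy: (i) if all firms have increasing returns to diversification, then $W$ at the fully connected structure is at least $W$ at the islands structure; (ii) if all firms have decreasing returns to diversification, then $W$ at the islands structure is at least $W$ at the fully connected structure.
   Context: Sectors $0$ (labor) and $1,\dots,L$; base shares $a_{0,\ell}>0$, $\sum a_{0,\ell}=1$; requirements $b_{\ell,\ell'}\ge0$, $b_{\ell,0}>0$, $\sum_{\ell'=0}^Lb_{\ell,\ell'}\le1$. $n$-fold replicate: firms $M=\{1,\dots,nL\}$, $M_\ell=\{(\ell-1)n+1,\dots,\ell n\}$ (firm $(\ell-1)n+c$ in country $c$), household share $a_{0,i}=a_{0,\ell}/n$ for $i\in M_\ell$. For a partition $\mathcal{Q}=\{Q_1,\dots,Q_K\}$ of $\{1,\dots,n\}$, $Q_{\ell,k}=\{(\ell-1)n+c:c\in Q_k\}$ and $a^{\mathcal{Q}}$: for $i\in Q_{\ell,k}$, $a_{i,0}=b_{\ell,0}$, $a_{i,i}=b_{\ell,\ell}$, $a_{i,j}=0$ for $j\in Q_{\ell,k}\setminus\{i\}$, $a_{i,j}=b_{\ell,\ell'}/|Q_k|$ for $j\in Q_{\ell',k}$, $\ell'\notin\{0,\ell\}$, $0$ otherwise. Islands structure: $\mathcal{Q}=\{\{1\},\dots,\{n\}\}$; fully connected: $\mathcal{Q}=\{\{1,\dots,n\}\}$. Welfare $W(A,\lambda)=a_0^T(I-A)^{-1}u$, $A=(a_{i,j})_{i,j\in M}$, $u_i=\log\lambda_i(a_i)+\sum_{j\in M\cup\{0\}}a_{i,j}\log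 a_{i,j}$. Hicks-neutral productivity $\bar\lambda(a_i)=1/\prod_{j\in M}a_{i,j}^{a_{i,j}}$. Firm $i$ (with productivity function $\lambda_i>0$ on $\mathbb{R}^M_+$) has increasing (resp. decreasing) returns to diversification if for all $a_i,a'_i$: $\bar\lambda(a_i)\ge\bar\lambda(a'_i)\Rightarrow \lambda_i(a_i)/\lambda_i(a'_i)\ge\bar\lambda(a_i)/\bar\lambda(a'_i)$ (resp. $\le$). *)

theory Defs
  imports Complex_Main "Jordan_Normal_Form.Gauss_Jordan_Elimination"
begin

(* Firms are numbered 1..n*L as in the paper; labour is index 0.
   Firm i (1 \<le> i \<le> n*L) lies in sector (i-1) div n + 1 and country (i-1) mod n + 1. *)

definition firms :: "nat \<Rightarrow> nat \<Rightarrow> nat set" where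
  "firms n L = {1..n*L}"

definition sector :: "nat \<Rightarrow> nat \<Rightarrow> nat" where
  "sector n i = (i - 1) div n + 1"

definition country :: "nat \<Rightarrow> nat \<Rightarrow> nat" where
  "country n i = (i - 1) mod n + 1"

definition blk :: "nat set set \<Rightarrow> nat \<Rightarrow> nat set" where
  "blk Q c = (THE S. S \<in> Q \<and> c \<in> S)"

definition islands :: "nat \<Rightarrow> nat set set" where
  "islands n = (\<lambda>c. {c}) ` {1..n}"

definition fully_connected :: "nat \<Rightarrow> nat set set" where
  "fully_connected n = {{1..n}}"

definition aQ :: "nat \<Rightarrow> nat \<Rightarrow> (nat \<Rightarrow> nat \<Rightarrow> real) \<Rightarrow> nat set set \<Rightarrow> nat \<Rightarrow> nat \<Rightarrow> real" where
  "aQ n L b Q i j =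
     (if j = 0 then b (sector n i) 0
      else if j \<notin> firms n L then 0
      else if sector n j = sector n i then (if j = i then b (sector n i) (sector n i) else 0)
      else if country n j \<in> blk Q (country n i)
        then b (sector n i) (sector n j) / real (card (blk Q (country n i)))
      else 0)"

definition hh :: "nat \<Rightarrow> (nat \<Rightarrow> real) \<Rightarrow> nat \<Rightarrow> real" where
  "hh n a0 i = a0 (sector n i) / real n"

definition xlogx :: "real \<Rightarrow> real" where
  "xlogx x = (if x = 0 then 0 else x * ln x)"

definition xpowx :: "real \<Rightarrow> real" where
  "xpowx x = (if x = 0 then 1 else x powr x)"

(* elements of R^M_+, represented as functions vanishing outside M *)
definition nonneg_vec :: "nat set \<Rightarrow> (nat \<Rightarrow> real) \<Rightarrow> bool" where
  "nonneg_vec M a \<longleftrightarrow> (\<forall>j\<in>M. 0 \<le> a j) \<and> (\<forall>j. j \<notin> M \<longrightarrow> a j = 0)"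

definition hicks :: "nat set \<Rightarrow> (nat \<Rightarrow> real) \<Rightarrow> real" where
  "hicks M a = 1 / (\<Prod>j\<in>M. xpowx (a j))"

definition incr_returns :: "nat set \<Rightarrow> ((nat \<Rightarrow> real) \<Rightarrow> real) \<Rightarrow> bool" where
  "incr_returns M lam \<longleftrightarrow> (\<forall>a a'. nonneg_vec M a \<longrightarrow> nonneg_vec M a' \<longrightarrow>
      hicks M a \<ge> hicks M a' \<longrightarrow> lam a / lam a' \<ge> hicks M a / hicks M a')"

definition decr_returns :: "nat set \<Rightarrow> ((nat \<Rightarrow> real) \<Rightarrow> real) \<Rightarrow> bool" where
  "decr_returns M lam \<longleftrightarrow> (\<forall>a a'. nonneg_vec M a \<longrightarrow> nonneg_vec M a' \<longrightarrow>
      hicks M a \<ge> hicks M a' \<longrightarrow> lam a / lam a' \<le> hicks M a / hicks M a')"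

definition row :: "nat set \<Rightarrow> (nat \<Rightarrow> nat \<Rightarrow> real) \<Rightarrow> nat \<Rightarrow> nat \<Rightarrow> real" where
  "row M a i = (\<lambda>j. if j \<in> M then a i j else 0)"

definition uvec :: "nat set \<Rightarrow> (nat \<Rightarrow> nat \<Rightarrow> real) \<Rightarrow> (nat \<Rightarrow> (nat \<Rightarrow> real) \<Rightarrow> real) \<Rightarrow> nat \<Rightarrow> real" where
  "uvec M a lam i = ln (lam i (row M a i)) + (\<Sum>j\<in>M \<union> {0}. xlogx (a i j))"

(* Welfare W(A,lambda) = a_0^T (I - A)^{-1} u, with A = (a_{ij})_{i,j \<in> M}, M = {1..N};
   JNF matrices are 0-indexed, so firm i corresponds to row/column i-1. *)
definition welfare :: "nat \<Rightarrow> (nat \<Rightarrow> real) \<Rightarrow> (nat \<Rightarrow> nat \<Rightarrow> real) \<Rightarrow> (nat \<Rightarrow> (nat \<Rightarrow> real) \<Rightarrow> real) \<Rightarrow> real" where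
  "welfare N a0 a lam =
     (let Am = mat N N (\<lambda>(i, j). a (i + 1) (j + 1));
          a0v = vec N (\<lambda>i. a0 (i + 1));
          uv = vec N (\<lambda>i. uvec {1..N} a lam (i + 1))
      in a0v \<bullet> (the (mat_inverse (1\<^sub>m N - Am)) *\<^sub>v uv))"

end

theory Submission
  imports Defs "Jordan_Normal_Form.Determinant"
begin

(* Welfare is a_0^T (I - A)^{-1} u = (SUM i. sigma_i * u_i), where the Domar weights sigma >= 0
   solve sigma = a_0 + sigma A.  In both the islands and the fully connected structure every firm
   of sector l buys b_{l,l'} in total from sector l', and every firm of sector l' sells b_{l,l'} in
   total to sector l.  Hence the weights that are constant across countries, obtained from the
   L-sector system t = a_0/n + t b, are Domar weights for both structures, and the two welfare
   levels are sums over the same nonnegative weights.  It remains to compare u_i firm by firm: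
   u_i = log lambda_i(a_i) - log lambda_bar(a_i) + b_{l,0} log b_{l,0}, and spreading a firm's
   purchases over n countries lowers (SUM j. a_ij log a_ij), i.e. raises the Hicks-neutral
   productivity lambda_bar.  Increasing (decreasing) returns to diversification say precisely that
   log lambda_i - log lambda_bar then rises (falls). *)


definition strictly_substochastic :: "nat \<Rightarrow> (nat \<Rightarrow> nat \<Rightarrow> real) \<Rightarrow> bool" where
  "strictly_substochastic N A \<longleftrightarrow> (\<forall>i<N. \<forall>j<N. 0 \<le> A i j) \<and> (\<forall>i<N. (\<Sum>j<N. A i j) < 1)"

definition leontief_matrix :: "nat \<Rightarrow> (nat \<Rightarrow> nat \<Rightarrow> real) \<Rightarrow> real mat" where
  "leontief_matrix N A = 1\<^sub>m N - mat N N (\<lambda>(i, j). A i j)"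

lemma leontief_matrix_carrier [simp]: "leontief_matrix N A \<in> carrier_mat N N"
  unfolding leontief_matrix_def by auto

lemma leontief_matrix_dim [simp]:
  "dim_row (leontief_matrix N A) = N" "dim_col (leontief_matrix N A) = N"
  unfolding leontief_matrix_def by auto

lemma leontief_matrix_mult_vec:
  assumes "v \<in> carrier_vec N" "i < N"
  shows "(leontief_matrix N A *\<^sub>v v) $ i = v $ i - (\<Sum>j<N. A i j * v $ j)"
  using assms
  by (simp add: leontief_matrix_def scalar_prod_def atLeast0LessThan sum_subtractf
      left_diff_distrib if_distrib[of "\<lambda>x. x * _"] sum.delta cong: if_cong)

lemma transpose_leontief_matrix_mult_vec:
  assumes "v \<in> carrier_vec N" "j < N"
  shows "(transpose_mat (leontief_matrix N A) *\<^sub>v v) $ j = v $ j - (\<Sum>i<N. v $ i * A i j)"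
  using assms
  by (simp add: leontief_matrix_def scalar_prod_def atLeast0LessThan sum_subtractf
      right_diff_distrib mult.commute if_distrib[of "\<lambda>x. _ * x"] sum.delta cong: if_cong)

lemma nonneg_if_leontief_image_nonneg:
  assumes A: "strictly_substochastic N A"
    and image_nonneg: "\<forall>i<N. 0 \<le> x i - (\<Sum>j<N. A i j * x j)"
    and "i < N"
  shows "0 \<le> x i"
proof (rule ccontr)
  assume "\<not> 0 \<le> x i"
  have fin: "finite (x ` {..<N})" "x ` {..<N} \<noteq> {}"
    using \<open>i < N\<close> by auto
  obtain m where "m < N" "x m = Min (x ` {..<N})"
    using Min_in[OF fin] by auto
  with Min_le[OF fin(1)] have m: "m < N" "\<forall>j<N. x m \<le> x j"
    by auto
  with \<open>\<not> 0 \<le> x i\<close> \<open>i < N\<close> have "x m < 0" by force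
  have "x m * (\<Sum>j<N. A m j) = (\<Sum>j<N. A m j * x m)"
    by (simp add: sum_distrib_left mult.commute)
  also have "\<dots> \<le> (\<Sum>j<N. A m j * x j)"
    using A m unfolding strictly_substochastic_def by (intro sum_mono mult_left_mono) auto
  also have "\<dots> \<le> x m"
    using image_nonneg m by auto
  finally have "0 \<le> x m * (1 - (\<Sum>j<N. A m j))"
    by (simp add: algebra_simps)
  moreover have "0 < 1 - (\<Sum>j<N. A m j)"
    using A m unfolding strictly_substochastic_def by auto
  ultimately show False
    using \<open>x m < 0\<close> by (simp add: zero_le_mult_iff)
qed

lemma leontief_matrix_invertible:
  assumes A: "strictly_substochastic N A"
  obtains S where "mat_inverse (leontief_matrix N A) = Some S"
proof -
  have "det (leontief_matrix N A) \<noteq> 0"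
  proof
    assume "det (leontief_matrix N A) = 0"
    then obtain v where v: "v \<in> carrier_vec N" "v \<noteq> 0\<^sub>v N" "leontief_matrix N A *\<^sub>v v = 0\<^sub>v N"
      using det_0_iff_vec_prod_zero[OF leontief_matrix_carrier[of N A]] by blast
    have kernel: "v $ i - (\<Sum>j<N. A i j * v $ j) = 0" if "i < N" for i
      using leontief_matrix_mult_vec[OF v(1) that, of A] v(3) that by simp
    have "0 \<le> v $ i" if "i < N" for i
      using nonneg_if_leontief_image_nonneg[OF A _ that, of "\<lambda>j. v $ j"] kernel by simp
    moreover have "0 \<le> - v $ i" if "i < N" for i
      using nonneg_if_leontief_image_nonneg[OF A _ that, of "\<lambda>j. - v $ j"] kernel
      by (simp add: sum_negf)
    ultimately have "v $ i = 0" if "i < N" for i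
      using that by fastforce
    then have "v = 0\<^sub>v N"
      using v(1) by (intro eq_vecI) auto
    with v(2) show False ..
  qed
  then have "leontief_matrix N A \<in> Units (ring_mat TYPE(real) N ())"
    by (rule det_non_zero_imp_unit[OF leontief_matrix_carrier])
  then have "mat_inverse (leontief_matrix N A) \<noteq> None"
    using mat_inverse(1)[OF leontief_matrix_carrier[of N A], where b = "()"] by blast
  then show thesis
    using that by blast
qed

lemma leontief_inverse_nonneg:
  assumes A: "strictly_substochastic N A"
    and S: "mat_inverse (leontief_matrix N A) = Some S"
    and "i < N" "j < N"
  shows "0 \<le> S $$ (i, j)"
proof -
  have MS: "leontief_matrix N A * S = 1\<^sub>m N" and S_carrier: "S \<in> carrier_mat N N"
    using mat_inverse(2)[OF leontief_matrix_carrier S] by blast+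
  have col: "col S j \<in> carrier_vec N"
    using col_carrier_vec[OF \<open>j < N\<close> S_carrier] .
  have "leontief_matrix N A *\<^sub>v col S j = col (leontief_matrix N A * S) j"
    by (rule col_mult2[OF leontief_matrix_carrier S_carrier \<open>j < N\<close>, symmetric])
  also have "\<dots> = unit_vec N j"
    using \<open>j < N\<close> by (simp only: MS col_one)
  finally have S_col: "leontief_matrix N A *\<^sub>v col S j = unit_vec N j" .
  have "S $$ (k, j) - (\<Sum>l<N. A k l * S $$ (l, j)) = (if k = j then 1 else 0)" if "k < N" for k
    using S_col leontief_matrix_mult_vec[OF col that, of A] that S_carrier \<open>j < N\<close> by simp
  then have "\<forall>k<N. 0 \<le> S $$ (k, j) - (\<Sum>l<N. A k l * S $$ (l, j))"
    by simp
  from nonneg_if_leontief_image_nonneg[OF A this \<open>i < N\<close>] show ?thesis .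
qed

lemma domar_weights_exist:
  assumes A: "strictly_substochastic N A" and a: "\<forall>j<N. 0 \<le> a j"
  obtains \<sigma> where "\<forall>k<N. 0 \<le> \<sigma> k" and "\<forall>j<N. \<sigma> j - (\<Sum>i<N. \<sigma> i * A i j) = a j"
proof -
  obtain S where S: "mat_inverse (leontief_matrix N A) = Some S"
    using leontief_matrix_invertible[OF A] .
  have SM: "S * leontief_matrix N A = 1\<^sub>m N" and S_carrier: "S \<in> carrier_mat N N"
    using mat_inverse(2)[OF leontief_matrix_carrier S] by blast+
  define \<sigma> where "\<sigma> = transpose_mat S *\<^sub>v vec N a"
  have \<sigma>_carrier: "\<sigma> \<in> carrier_vec N"
    unfolding \<sigma>_def using S_carrier by simp
  have "transpose_mat (leontief_matrix N A) *\<^sub>v \<sigma> = transpose_mat (S * leontief_matrix N A) *\<^sub>v vec N a"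
    unfolding \<sigma>_def using S_carrier
    by (simp add: transpose_mult[OF S_carrier leontief_matrix_carrier]
        assoc_mult_mat_vec[of "transpose_mat (leontief_matrix N A)" N N "transpose_mat S" N])
  also have "\<dots> = vec N a"
    by (simp only: SM transpose_one) simp
  finally have "\<sigma> $ j - (\<Sum>i<N. \<sigma> $ i * A i j) = a j" if "j < N" for j
    using transpose_leontief_matrix_mult_vec[OF \<sigma>_carrier that, of A] that by simp
  moreover have "0 \<le> \<sigma> $ k" if "k < N" for k
    unfolding \<sigma>_def using that S_carrier a leontief_inverse_nonneg[OF A S]
    by (auto simp: scalar_prod_def intro!: sum_nonneg)
  ultimately show thesis
    using that[of "\<lambda>k. \<sigma> $ k"] by blast
qed

lemma leontief_inverse_weighted_sum:
  assumes A: "strictly_substochastic N A"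
    and \<sigma>: "\<forall>j<N. \<sigma> j - (\<Sum>i<N. \<sigma> i * A i j) = a j"
  shows "vec N a \<bullet> (the (mat_inverse (leontief_matrix N A)) *\<^sub>v vec N u) = (\<Sum>k<N. \<sigma> k * u k)"
proof -
  obtain S where S: "mat_inverse (leontief_matrix N A) = Some S"
    using leontief_matrix_invertible[OF A] .
  have MS: "leontief_matrix N A * S = 1\<^sub>m N" and S_carrier: "S \<in> carrier_mat N N"
    using mat_inverse(2)[OF leontief_matrix_carrier S] by blast+
  have "transpose_mat (leontief_matrix N A) *\<^sub>v vec N \<sigma> = vec N a"
  proof (rule eq_vecI)
    show "dim_vec (transpose_mat (leontief_matrix N A) *\<^sub>v vec N \<sigma>) = dim_vec (vec N a)"
      by simp
    fix j assume "j < dim_vec (vec N a)"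
    then show "(transpose_mat (leontief_matrix N A) *\<^sub>v vec N \<sigma>) $ j = vec N a $ j"
      using transpose_leontief_matrix_mult_vec[of "vec N \<sigma>" N j A] \<sigma> by simp
  qed
  then have "vec N a \<bullet> (S *\<^sub>v vec N u) = vec N \<sigma> \<bullet> (leontief_matrix N A *\<^sub>v (S *\<^sub>v vec N u))"
    using S_carrier by (simp add: transpose_vec_mult_scalar[OF leontief_matrix_carrier, symmetric])
  also have "leontief_matrix N A *\<^sub>v (S *\<^sub>v vec N u) = (leontief_matrix N A * S) *\<^sub>v vec N u"
    by (rule assoc_mult_mat_vec[OF leontief_matrix_carrier S_carrier, symmetric]) simp
  also have "\<dots> = vec N u"
    by (simp add: MS)
  finally show ?thesis
    using S by (simp add: scalar_prod_def atLeast0LessThan)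
qed

lemma welfare_eq_weighted_utility:
  assumes "strictly_substochastic N (\<lambda>i j. a (Suc i) (Suc j))"
    and "\<forall>j<N. \<sigma> j - (\<Sum>i<N. \<sigma> i * a (Suc i) (Suc j)) = a0 (Suc j)"
  shows "welfare N a0 a lam = (\<Sum>k<N. \<sigma> k * uvec {1..N} a lam (Suc k))"
  using leontief_inverse_weighted_sum[OF assms]
  unfolding welfare_def Let_def leontief_matrix_def by simp

lemma sum_firm_blocks:
  fixes f :: "nat \<Rightarrow> 'a::comm_monoid_add"
  shows "(\<Sum>k<n*L. f k) = (\<Sum>l<L. \<Sum>c<n. f (l*n + c))"
proof -
  have "(\<Sum>k<n*L. f k) = (\<Sum>l<L. sum f {l*n..<l*n + n})"
    using sum.nat_group[of f n L] by (simp add: mult.commute)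
  also have "\<dots> = (\<Sum>l<L. \<Sum>c<n. f (l*n + c))"
  proof (rule sum.cong[OF refl])
    fix l
    have "sum f {l*n..<l*n + n} = sum f {0 + l*n..<n + l*n}"
      by (simp add: add.commute)
    also have "\<dots> = (\<Sum>c<n. f (c + l*n))"
      by (simp only: sum.shift_bounds_nat_ivl atLeast0LessThan)
    finally show "sum f {l*n..<l*n + n} = (\<Sum>c<n. f (l*n + c))"
      by (simp add: add.commute)
  qed
  finally show ?thesis .
qed

lemma firm_index_cases:
  fixes k n L :: nat
  assumes "k < n*L"
  obtains l c where "l < L" "c < n" "k = l*n + c"
proof
  show "k div n < L"
    using assms by (simp add: less_mult_imp_div_less mult.commute)
  show "k mod n < n"
    using assms by (cases "n = 0") auto
qed simp

lemma firm_block_index_less: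
  assumes "l < L" "c < (n::nat)"
  shows "l*n + c < n*L"
proof -
  have "l*n + c < Suc l * n"
    using assms by simp
  also have "\<dots> \<le> L * n"
    using assms by (intro mult_right_mono) auto
  finally show ?thesis
    by (simp add: mult.commute)
qed

lemma firm_block_index_eq_iff:
  assumes "c < n" "c' < (n::nat)"
  shows "l'*n + c' = l*n + c \<longleftrightarrow> l' = l \<and> c' = c"
proof -
  have "(l*n + c) div n = l" "(l*n + c) mod n = c" "(l'*n + c') div n = l'" "(l'*n + c') mod n = c'"
    using assms by simp_all
  then show ?thesis
    by metis
qed

lemma sector_country_block [simp]:
  assumes "c < n"
  shows "sector n (Suc (l*n + c)) = Suc l" "country n (Suc (l*n + c)) = Suc c"
  using assms by (simp_all add: sector_def country_def)

lemma aQ_islands_block: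
  assumes "l' < L" "c < n" "c' < n"
  shows "aQ n L b (islands n) (Suc (l*n + c)) (Suc (l'*n + c'))
    = (if c' = c then b (Suc l) (Suc l') else 0)"
proof -
  have "blk (islands n) (Suc c) = {Suc c}"
    unfolding blk_def islands_def using assms by (intro the_equality) auto
  moreover have "Suc (l'*n + c') \<in> firms n L"
    using firm_block_index_less[of l' L c' n] assms by (simp add: firms_def)
  ultimately show ?thesis
    using assms firm_block_index_eq_iff[of c n c' l' l] unfolding aQ_def by auto
qed

lemma aQ_fully_connected_block:
  assumes "l' < L" "c < n" "c' < n"
  shows "aQ n L b (fully_connected n) (Suc (l*n + c)) (Suc (l'*n + c'))
    = (if l' = l then (if c' = c then b (Suc l) (Suc l) else 0) else b (Suc l) (Suc l') / real n)"
proof -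
  have "blk (fully_connected n) (Suc c) = {1..n}"
    unfolding blk_def fully_connected_def using assms by (intro the_equality) auto
  moreover have "Suc (l'*n + c') \<in> firms n L"
    using firm_block_index_less[of l' L c' n] assms by (simp add: firms_def)
  ultimately show ?thesis
    using assms firm_block_index_eq_iff[of c n c' l' l] unfolding aQ_def by auto
qed

(* Firms are indexed from 0 here: firm l*n + c is the firm of sector l+1 in country c+1, i.e.
   firm number l*n + c + 1 of the input-share matrix aQ. *)
definition replica_matrix :: "nat \<Rightarrow> nat \<Rightarrow> (nat \<Rightarrow> nat \<Rightarrow> real) \<Rightarrow> (nat \<Rightarrow> nat \<Rightarrow> real) \<Rightarrow> bool" where
  "replica_matrix n L \<beta> B \<longleftrightarrow>
     (\<forall>k<n*L. \<forall>m<n*L. 0 \<le> B k m)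
     \<and> (\<forall>l<L. \<forall>c<n. \<forall>l'<L. (\<Sum>c'<n. B (l*n + c) (l'*n + c')) = \<beta> l l')
     \<and> (\<forall>l<L. \<forall>l'<L. \<forall>c'<n. (\<Sum>c<n. B (l*n + c) (l'*n + c')) = \<beta> l l')"

lemma replica_matrix_islands:
  assumes b: "\<forall>l<L. \<forall>l'<L. 0 \<le> b (Suc l) (Suc l')"
  shows "replica_matrix n L (\<lambda>l l'. b (Suc l) (Suc l')) (\<lambda>k m. aQ n L b (islands n) (Suc k) (Suc m))"
  unfolding replica_matrix_def
proof (intro conjI allI impI)
  fix k m assume "k < n*L" "m < n*L"
  then obtain l c l' c' where "l < L" "c < n" "k = l*n + c" "l' < L" "c' < n" "m = l'*n + c'"
    by (metis firm_index_cases)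
  then show "0 \<le> aQ n L b (islands n) (Suc k) (Suc m)"
    using b by (simp add: aQ_islands_block)
next
  fix l c l' assume "l < L" "c < n" "l' < L"
  then show "(\<Sum>c'<n. aQ n L b (islands n) (Suc (l*n + c)) (Suc (l'*n + c'))) = b (Suc l) (Suc l')"
    by (simp add: aQ_islands_block)
next
  fix l l' c' assume "l < L" "l' < L" "c' < n"
  then show "(\<Sum>c<n. aQ n L b (islands n) (Suc (l*n + c)) (Suc (l'*n + c'))) = b (Suc l) (Suc l')"
    by (simp add: aQ_islands_block eq_commute[of c'])
qed

lemma replica_matrix_fully_connected:
  assumes b: "\<forall>l<L. \<forall>l'<L. 0 \<le> b (Suc l) (Suc l')"
  shows "replica_matrix n L (\<lambda>l l'. b (Suc l) (Suc l')) (\<lambda>k m. aQ n L b (fully_connected n) (Suc k) (Suc m))"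
  unfolding replica_matrix_def
proof (intro conjI allI impI)
  fix k m assume "k < n*L" "m < n*L"
  then obtain l c l' c' where "l < L" "c < n" "k = l*n + c" "l' < L" "c' < n" "m = l'*n + c'"
    by (metis firm_index_cases)
  then show "0 \<le> aQ n L b (fully_connected n) (Suc k) (Suc m)"
    using b by (simp add: aQ_fully_connected_block)
next
  fix l c l' assume "l < L" "c < n" "l' < L"
  then show "(\<Sum>c'<n. aQ n L b (fully_connected n) (Suc (l*n + c)) (Suc (l'*n + c'))) = b (Suc l) (Suc l')"
    by (cases "l' = l") (simp_all add: aQ_fully_connected_block)
next
  fix l l' c' assume "l < L" "l' < L" "c' < n"
  then show "(\<Sum>c<n. aQ n L b (fully_connected n) (Suc (l*n + c)) (Suc (l'*n + c'))) = b (Suc l) (Suc l')"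
    by (cases "l' = l") (simp_all add: aQ_fully_connected_block eq_commute[of c'])
qed

lemma replica_strictly_substochastic:
  assumes R: "replica_matrix n L \<beta> B" and \<beta>: "strictly_substochastic L \<beta>"
  shows "strictly_substochastic (n*L) B"
  unfolding strictly_substochastic_def
proof (intro conjI allI impI)
  fix k m assume "k < n*L" "m < n*L"
  then show "0 \<le> B k m"
    using R unfolding replica_matrix_def by blast
next
  fix k assume "k < n*L"
  then obtain l c where lc: "l < L" "c < n" "k = l*n + c"
    by (rule firm_index_cases)
  have "(\<Sum>m<n*L. B k m) = (\<Sum>l'<L. \<Sum>c'<n. B (l*n + c) (l'*n + c'))"
    unfolding lc(3) by (rule sum_firm_blocks)
  also have "\<dots> = (\<Sum>l'<L. \<beta> l l')"
    using R lc unfolding replica_matrix_def by (intro sum.cong) auto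
  also have "\<dots> < 1"
    using \<beta> lc unfolding strictly_substochastic_def by blast
  finally show "(\<Sum>m<n*L. B k m) < 1" .
qed

lemma replica_sector_weights:
  assumes R: "replica_matrix n L \<beta> B"
    and t: "\<forall>l'<L. t l' - (\<Sum>l<L. t l * \<beta> l l') = \<alpha> l'"
  shows "\<forall>j<n*L. t (j div n) - (\<Sum>i<n*L. t (i div n) * B i j) = \<alpha> (j div n)"
proof (intro allI impI)
  fix j assume "j < n*L"
  then obtain l' c' where lc: "l' < L" "c' < n" "j = l'*n + c'"
    by (rule firm_index_cases)
  have "(\<Sum>i<n*L. t (i div n) * B i j) = (\<Sum>l<L. \<Sum>c<n. t l * B (l*n + c) (l'*n + c'))"
    unfolding lc(3) sum_firm_blocks[where f = "\<lambda>i. t (i div n) * B i _"]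
    by (intro sum.cong refl) (use lc in simp)
  also have "\<dots> = (\<Sum>l<L. t l * \<beta> l l')"
    using R lc unfolding replica_matrix_def by (intro sum.cong) (auto simp: sum_distrib_left[symmetric])
  finally show "t (j div n) - (\<Sum>i<n*L. t (i div n) * B i j) = \<alpha> (j div n)"
    using t lc by simp
qed

lemma welfare_replica:
  assumes R: "replica_matrix n L \<beta> (\<lambda>k m. a (Suc k) (Suc m))"
    and \<beta>: "strictly_substochastic L \<beta>"
    and t: "\<forall>l'<L. t l' - (\<Sum>l<L. t l * \<beta> l l') = a0 (Suc l') / real n"
  shows "welfare (n*L) (hh n a0) a lam = (\<Sum>k<n*L. t (k div n) * uvec (firms n L) a lam (Suc k))"
proof -
  have "\<forall>j<n*L. t (j div n) - (\<Sum>i<n*L. t (i div n) * a (Suc i) (Suc j)) = hh n a0 (Suc j)"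
    using replica_sector_weights[OF R t] by (simp add: hh_def sector_def)
  then show ?thesis
    unfolding firms_def
    by (rule welfare_eq_weighted_utility[OF replica_strictly_substochastic[OF R \<beta>]])
qed

lemma hicks_pos: "0 < hicks M a"
proof -
  have "0 < xpowx x" for x
    by (simp add: xpowx_def)
  then show ?thesis
    unfolding hicks_def by (simp add: prod_pos)
qed

lemma hicks_eq_exp_entropy:
  assumes "finite M" "\<forall>j\<in>M. 0 \<le> a j"
  shows "hicks M a = exp (- (\<Sum>j\<in>M. xlogx (a j)))"
proof -
  have "(\<Prod>j\<in>M. xpowx (a j)) = (\<Prod>j\<in>M. exp (xlogx (a j)))"
    using assms(2) by (intro prod.cong) (auto simp: xpowx_def xlogx_def powr_def)
  also have "\<dots> = exp (\<Sum>j\<in>M. xlogx (a j))"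
    by (simp add: exp_sum assms(1))
  finally show ?thesis
    unfolding hicks_def by (simp add: exp_minus inverse_eq_divide)
qed

lemma nonneg_vec_row:
  assumes "\<forall>j\<in>M. 0 \<le> a i j"
  shows "nonneg_vec M (row M a i)"
  using assms unfolding nonneg_vec_def row_def by simp

lemma uvec_eq_log_excess_productivity:
  assumes "finite M" "0 \<notin> M" "\<forall>j\<in>M. 0 \<le> a i j"
  shows "uvec M a lam i = ln (lam i (row M a i)) - ln (hicks M (row M a i)) + xlogx (a i 0)"
proof -
  have "hicks M (row M a i) = exp (- (\<Sum>j\<in>M. xlogx (a i j)))"
    using hicks_eq_exp_entropy[OF assms(1), of "row M a i"] assms(3)
    by (simp add: row_def cong: sum.cong)
  then show ?thesis
    using assms(1,2) unfolding uvec_def by simp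
qed

lemma incr_returns_log_excess_mono:
  assumes "incr_returns M lam" "nonneg_vec M x" "nonneg_vec M y"
    and "hicks M y \<le> hicks M x" "0 < lam x" "0 < lam y"
  shows "ln (lam y) - ln (hicks M y) \<le> ln (lam x) - ln (hicks M x)"
proof -
  have "hicks M x / hicks M y \<le> lam x / lam y"
    using assms(1-4) unfolding incr_returns_def by blast
  then have "ln (hicks M x / hicks M y) \<le> ln (lam x / lam y)"
    using assms(5,6) hicks_pos by simp
  then show ?thesis
    using assms(5,6) hicks_pos[of M x] hicks_pos[of M y] by (simp add: ln_div)
qed

lemma decr_returns_log_excess_mono:
  assumes "decr_returns M lam" "nonneg_vec M x" "nonneg_vec M y"
    and "hicks M y \<le> hicks M x" "0 < lam x" "0 < lam y"
  shows "ln (lam x) - ln (hicks M x) \<le> ln (lam y) - ln (hicks M y)"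
proof -
  have "lam x / lam y \<le> hicks M x / hicks M y"
    using assms(1-4) unfolding decr_returns_def by blast
  then have "ln (lam x / lam y) \<le> ln (hicks M x / hicks M y)"
    using assms(5,6) hicks_pos by simp
  then show ?thesis
    using assms(5,6) hicks_pos[of M x] hicks_pos[of M y] by (simp add: ln_div)
qed

lemma mult_xlogx_divide_le:
  assumes "0 \<le> x" "1 \<le> r"
  shows "r * xlogx (x / r) \<le> xlogx x"
proof (cases "x = 0")
  case False
  then have "r * xlogx (x / r) = x * ln x - x * ln r"
    using assms by (simp add: xlogx_def ln_div right_diff_distrib)
  also have "\<dots> \<le> x * ln x"
    using assms by simp
  finally show ?thesis
    using False by (simp add: xlogx_def)
qed (simp add: xlogx_def)

lemma entropy_fully_connected_le_islands:
  assumes b: "\<forall>l<L. \<forall>l'<L. 0 \<le> b (Suc l) (Suc l')" and "k < n*L"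
  shows "(\<Sum>m<n*L. xlogx (aQ n L b (fully_connected n) (Suc k) (Suc m)))
    \<le> (\<Sum>m<n*L. xlogx (aQ n L b (islands n) (Suc k) (Suc m)))"
proof -
  obtain l c where lc: "l < L" "c < n" "k = l*n + c"
    using \<open>k < n*L\<close> by (rule firm_index_cases)
  have xlogx_if: "xlogx (if P then x else 0) = (if P then xlogx x else 0)" for P x
    by (simp add: xlogx_def)
  have "(\<Sum>c'<n. xlogx (aQ n L b (fully_connected n) (Suc k) (Suc (l'*n + c'))))
      \<le> (\<Sum>c'<n. xlogx (aQ n L b (islands n) (Suc k) (Suc (l'*n + c'))))" if "l' < L" for l'
  proof (cases "l' = l")
    case True
    then show ?thesis
      using lc that by (simp add: aQ_fully_connected_block aQ_islands_block xlogx_if)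
  next
    case False
    have "real n * xlogx (b (Suc l) (Suc l') / real n) \<le> xlogx (b (Suc l) (Suc l'))"
      using b lc that by (intro mult_xlogx_divide_le) auto
    then show ?thesis
      using False lc that by (simp add: aQ_fully_connected_block aQ_islands_block xlogx_if)
  qed
  then show ?thesis
    by (simp only: sum_firm_blocks[where f = "\<lambda>m. xlogx (_ (Suc m))"]) (rule sum_mono, simp)
qed

lemma replica_row_nonneg:
  assumes "replica_matrix n L \<beta> (\<lambda>k m. a (Suc k) (Suc m))" "k < n*L"
  shows "\<forall>j\<in>firms n L. 0 \<le> a (Suc k) j"
proof
  fix j assume "j \<in> firms n L"
  then obtain m where "j = Suc m" "m < n*L"
    unfolding firms_def by (cases j) auto
  then show "0 \<le> a (Suc k) j"
    using assms unfolding replica_matrix_def by blast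
qed

lemma hicks_firm_row:
  assumes "\<forall>j\<in>firms n L. 0 \<le> a i j"
  shows "hicks (firms n L) (row (firms n L) a i) = exp (- (\<Sum>m<n*L. xlogx (a i (Suc m))))"
proof -
  have "(\<Sum>j\<in>firms n L. xlogx (row (firms n L) a i j)) = (\<Sum>m<n*L. xlogx (a i (Suc m)))"
    unfolding firms_def row_def by (simp add: sum.atLeast1_atMost_eq)
  moreover have "\<forall>j\<in>firms n L. 0 \<le> row (firms n L) a i j"
    using assms by (simp add: row_def)
  ultimately show ?thesis
    using hicks_eq_exp_entropy[of "firms n L"] by (simp add: firms_def)
qed

lemma hicks_islands_le_fully_connected:
  assumes b: "\<forall>l<L. \<forall>l'<L. 0 \<le> b (Suc l) (Suc l')" and k: "k < n*L"
  shows "hicks (firms n L) (row (firms n L) (aQ n L b (islands n)) (Suc k))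
    \<le> hicks (firms n L) (row (firms n L) (aQ n L b (fully_connected n)) (Suc k))"
  using entropy_fully_connected_le_islands[OF b k]
    replica_row_nonneg[OF replica_matrix_islands[OF b] k]
    replica_row_nonneg[OF replica_matrix_fully_connected[OF b] k]
  by (simp add: hicks_firm_row)

lemma uvec_islands_fully_connected:
  assumes b: "\<forall>l<L. \<forall>l'<L. 0 \<le> b (Suc l) (Suc l')" and k: "k < n*L"
    and lam_pos: "\<forall>x. nonneg_vec (firms n L) x \<longrightarrow> 0 < lam (Suc k) x"
  shows "incr_returns (firms n L) (lam (Suc k)) \<Longrightarrow>
      uvec (firms n L) (aQ n L b (islands n)) lam (Suc k)
        \<le> uvec (firms n L) (aQ n L b (fully_connected n)) lam (Suc k)"
    and "decr_returns (firms n L) (lam (Suc k)) \<Longrightarrow>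
      uvec (firms n L) (aQ n L b (fully_connected n)) lam (Suc k)
        \<le> uvec (firms n L) (aQ n L b (islands n)) lam (Suc k)"
proof -
  let ?M = "firms n L"
  let ?I = "aQ n L b (islands n)" and ?F = "aQ n L b (fully_connected n)"
  define x where "x = row ?M ?F (Suc k)"
  define y where "y = row ?M ?I (Suc k)"
  have nonneg_F: "\<forall>j\<in>?M. 0 \<le> ?F (Suc k) j"
    by (rule replica_row_nonneg[OF replica_matrix_fully_connected[OF b] k])
  have nonneg_I: "\<forall>j\<in>?M. 0 \<le> ?I (Suc k) j"
    by (rule replica_row_nonneg[OF replica_matrix_islands[OF b] k])
  have x: "nonneg_vec ?M x" and y: "nonneg_vec ?M y"
    unfolding x_def y_def using nonneg_F nonneg_I by (simp_all add: nonneg_vec_row)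
  have hicks: "hicks ?M y \<le> hicks ?M x"
    unfolding x_def y_def by (rule hicks_islands_le_fully_connected[OF b k])
  have M: "finite ?M" "0 \<notin> ?M"
    by (simp_all add: firms_def)
  have "uvec ?M ?F lam (Suc k) - uvec ?M ?I lam (Suc k)
      = (ln (lam (Suc k) x) - ln (hicks ?M x)) - (ln (lam (Suc k) y) - ln (hicks ?M y))"
    using uvec_eq_log_excess_productivity[OF M, where a = ?F, OF nonneg_F]
      uvec_eq_log_excess_productivity[OF M, where a = ?I, OF nonneg_I]
    unfolding x_def y_def by (simp add: aQ_def)
  moreover have "0 < lam (Suc k) x" "0 < lam (Suc k) y"
    using lam_pos x y by blast+
  ultimately show "incr_returns ?M (lam (Suc k)) \<Longrightarrow> uvec ?M ?I lam (Suc k) \<le> uvec ?M ?F lam (Suc k)"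
    and "decr_returns ?M (lam (Suc k)) \<Longrightarrow> uvec ?M ?F lam (Suc k) \<le> uvec ?M ?I lam (Suc k)"
    using incr_returns_log_excess_mono[OF _ x y hicks] decr_returns_log_excess_mono[OF _ x y hicks]
    by fastforce+
qed

lemma sector_strictly_substochastic:
  assumes b_nonneg: "\<forall>l\<in>{1..L}. \<forall>l'\<in>{0..L}. 0 \<le> b l l'"
    and b_lab: "\<forall>l\<in>{1..L}. 0 < b l 0"
    and b_sum: "\<forall>l\<in>{1..L}. (\<Sum>l'=0..L. b l l') \<le> 1"
  shows "strictly_substochastic L (\<lambda>l l'. b (Suc l) (Suc l'))"
  unfolding strictly_substochastic_def
proof (intro conjI allI impI)
  fix l l' assume "l < L" "l' < L"
  then show "0 \<le> b (Suc l) (Suc l')"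
    using b_nonneg by simp
next
  fix l assume "l < L"
  have "(\<Sum>l'=0..L. b (Suc l) l') = b (Suc l) 0 + (\<Sum>l'<L. b (Suc l) (Suc l'))"
    by (simp add: sum.atLeast_Suc_atMost sum.atLeast1_atMost_eq)
  moreover have "0 < b (Suc l) 0" "(\<Sum>l'=0..L. b (Suc l) l') \<le> 1"
    using b_lab b_sum \<open>l < L\<close> by simp_all
  ultimately show "(\<Sum>l'<L. b (Suc l) (Suc l')) < 1"
    by linarith
qed

theorem mainTheorem13:
  fixes n L :: nat
    and a0 :: "nat \<Rightarrow> real"
    and b :: "nat \<Rightarrow> nat \<Rightarrow> real"
    and lam :: "nat \<Rightarrow> (nat \<Rightarrow> real) \<Rightarrow> real"
  assumes a0_pos: "\<forall>l\<in>{1..L}. 0 < a0 l"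
    and a0_sum: "(\<Sum>l=1..L. a0 l) = 1"
    and b_nonneg: "\<forall>l\<in>{1..L}. \<forall>l'\<in>{0..L}. 0 \<le> b l l'"
    and b_lab: "\<forall>l\<in>{1..L}. 0 < b l 0"
    and b_sum: "\<forall>l\<in>{1..L}. (\<Sum>l'=0..L. b l l') \<le> 1"
    and lam_pos: "\<forall>i\<in>firms n L. \<forall>x. nonneg_vec (firms n L) x \<longrightarrow> 0 < lam i x"
  shows "((\<forall>i\<in>firms n L. incr_returns (firms n L) (lam i)) \<longrightarrow>
            welfare (n * L) (hh n a0) (aQ n L b (fully_connected n)) lam
              \<ge> welfare (n * L) (hh n a0) (aQ n L b (islands n)) lam)
       \<and> ((\<forall>i\<in>firms n L. decr_returns (firms n L) (lam i)) \<longrightarrow>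
            welfare (n * L) (hh n a0) (aQ n L b (islands n)) lam
              \<ge> welfare (n * L) (hh n a0) (aQ n L b (fully_connected n)) lam)"
proof -
  let ?\<beta> = "\<lambda>l l'. b (Suc l) (Suc l')"
  let ?I = "aQ n L b (islands n)" and ?F = "aQ n L b (fully_connected n)"
  have b: "\<forall>l<L. \<forall>l'<L. 0 \<le> ?\<beta> l l'"
    using b_nonneg by simp
  have sector: "strictly_substochastic L ?\<beta>"
    using b_nonneg b_lab b_sum by (rule sector_strictly_substochastic)
  have "\<forall>l<L. 0 \<le> a0 (Suc l) / real n"
  proof (intro allI impI)
    fix l assume "l < L"
    then have "0 < a0 (Suc l)"
      using a0_pos by simp
    then show "0 \<le> a0 (Suc l) / real n"
      by simp
  qed
  then obtain t where t_nonneg: "\<forall>l<L. 0 \<le> t l"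
    and t: "\<forall>l'<L. t l' - (\<Sum>l<L. t l * ?\<beta> l l') = a0 (Suc l') / real n"
    by (rule domar_weights_exist[OF sector])
  have W_I: "welfare (n*L) (hh n a0) ?I lam = (\<Sum>k<n*L. t (k div n) * uvec (firms n L) ?I lam (Suc k))"
    by (rule welfare_replica[OF replica_matrix_islands[OF b] sector t])
  have W_F: "welfare (n*L) (hh n a0) ?F lam = (\<Sum>k<n*L. t (k div n) * uvec (firms n L) ?F lam (Suc k))"
    by (rule welfare_replica[OF replica_matrix_fully_connected[OF b] sector t])
  have "0 \<le> t (k div n)" and "Suc k \<in> firms n L" if "k < n*L" for k
    using that t_nonneg less_mult_imp_div_less[of k L n] by (simp_all add: firms_def mult.commute)
  then show ?thesis
    unfolding W_I W_F using lam_pos uvec_islands_fully_connected[OF b]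
    by (auto intro!: sum_mono mult_left_mono)
qed

end
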